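(* Let $R$ be a commutative ring with identity and $n>1$. Every (left or right) zero-divisor in $M_n(R)$ is a two-sided zero-divisor.
   Context: An element $x$ of a ring $S$ is a left (resp. right) zero-divisor if $xy=0$ (resp. $yx=0$) for some nonzero $y\in S$; a two-sided zero-divisor if it is both. *)

theory Defs
  imports "HOL-Analysis.Finite_Cartesian_Product"
begin

definition mat_left_zero_divisor :: "('a::comm_ring_1)^'n^'n \<Rightarrow> bool" where
  "mat_left_zero_divisor A \<longleftrightarrow> (\<exists>B::'a^'n^'n. B \<noteq> 0 \<and> A ** B = 0)"

definition mat_right_zero_divisor :: "('a::comm_ring_1)^'n^'n \<Rightarrow> bool" where
  "mat_right_zero_divisor A \<longleftrightarrow> (\<exists>B::'a^'n^'n. B \<noteq> 0 \<and> B ** A = 0)"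

definition mat_two_sided_zero_divisor :: "('a::comm_ring_1)^'n^'n \<Rightarrow> bool" where
  "mat_two_sided_zero_divisor A \<longleftrightarrow> mat_left_zero_divisor A \<and> mat_right_zero_divisor A"

end

theory Submission
  imports Defs "Jordan_Normal_Form.Determinant"
begin

text \<open>By McCoy's theorem, an m \<times> n matrix A over a commutative ring has a nonzero kernel
  vector iff some nonzero r annihilates all its n \<times> n minors. If A x = 0 with x_c \<noteq> 0, then
  x_c annihilates every maximal minor of A, hence of A^T, so A^T also has a nonzero kernel
  vector. A left zero-divisor of M_n(R) is exactly a matrix with a nonzero kernel vector, and a
  right zero-divisor one whose transpose has one.\<close>

no_notation Matrix.vec_index (infixl "$" 100)

definition minor :: "('a::comm_ring_1)^'n^'m \<Rightarrow> 'm list \<Rightarrow> 'n list \<Rightarrow> 'a" where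
  "minor A rs cs = det (Matrix.mat (length rs) (length rs) (\<lambda>(a, b). A $ (rs ! a) $ (cs ! b)))"

lemma minor_Nil [simp]: "minor A [] [] = 1"
  by (simp add: minor_def det_def)

lemma minor_transpose:
  assumes "length rs = length cs"
  shows "minor (Finite_Cartesian_Product.transpose A) rs cs = minor A cs rs"
proof -
  let ?M = "Matrix.mat (length cs) (length cs) (\<lambda>(a, b). A $ (cs ! a) $ (rs ! b))"
  have "minor (Finite_Cartesian_Product.transpose A) rs cs = det ?M\<^sup>T"
    unfolding minor_def using assms
    by (intro arg_cong[where f = det] eq_matI) (auto simp: Finite_Cartesian_Product.transpose_def)
  also have "\<dots> = det ?M"
    by (rule det_transpose) (rule mat_carrier)
  finally show ?thesis
    by (simp add: minor_def)
qed

lemma minor_repeated_row: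
  assumes "\<not> distinct rs"
  shows "minor A rs cs = 0"
proof -
  obtain a b where ab: "a < b" "b < length rs" "rs ! a = rs ! b"
    using assms by (metis distinct_conv_nth linorder_neqE_nat)
  show ?thesis
    unfolding minor_def using ab by (intro det_identical_rows[of _ "length rs" a b]) auto
qed

lemma minor_snoc_row_expansion:
  assumes len: "length cs = Suc (length rs)"
  shows "minor A (rs @ [i]) cs =
    (\<Sum>b<length cs.
      A $ i $ (cs ! b) * (-1) ^ (length rs + b) * minor A rs (take b cs @ drop (Suc b) cs))"
proof -
  let ?k = "length rs"
  define M where "M = Matrix.mat (Suc ?k) (Suc ?k) (\<lambda>(a, b). A $ ((rs @ [i]) ! a) $ (cs ! b))"
  have M: "M \<in> carrier_mat (Suc ?k) (Suc ?k)"
    by (simp add: M_def)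
  have "mat_delete M ?k b =
      Matrix.mat ?k ?k (\<lambda>(a, c). A $ (rs ! a) $ ((take b cs @ drop (Suc b) cs) ! c))"
    if "b < Suc ?k" for b
    using that len by (intro eq_matI) (auto simp: mat_delete_def M_def nth_append)
  then have "cofactor M ?k b = (-1) ^ (?k + b) * minor A rs (take b cs @ drop (Suc b) cs)"
    if "b < Suc ?k" for b
    using that len by (simp add: cofactor_def minor_def)
  moreover have "M $$ (?k, b) = A $ i $ (cs ! b)" if "b < Suc ?k" for b
    using that by (simp add: M_def)
  ultimately have "det M = (\<Sum>b<Suc ?k.
      A $ i $ (cs ! b) * ((-1) ^ (?k + b) * minor A rs (take b cs @ drop (Suc b) cs)))"
    using laplace_expansion_row[OF M, of ?k] by simp
  then show ?thesis
    using len by (simp add: minor_def M_def mult.assoc)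
qed

lemma kernel_vector_annihilates_maximal_minors:
  fixes A :: "('a::comm_ring_1)^'n^'m"
  assumes Ax: "A *v x = 0"
    and cs: "distinct cs" "length cs = CARD('n)" and rs: "length rs = CARD('n)"
  shows "x $ c * minor A rs cs = 0"
proof -
  let ?n = "CARD('n)"
  define M where "M = Matrix.mat ?n ?n (\<lambda>(a, b). A $ (rs ! a) $ (cs ! b))"
  define y where "y = Matrix.vec ?n (\<lambda>b. x $ (cs ! b))"
  have M: "M \<in> carrier_mat ?n ?n" and y: "y \<in> carrier_vec ?n"
    by (simp_all add: M_def y_def)
  have "set cs = UNIV"
    using cs by (simp add: card_eq_UNIV_imp_eq_UNIV distinct_card)
  then have cs_bij: "bij_betw (nth cs) {..<?n} UNIV"
    using cs by (intro bij_betw_nth) simp_all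
  have "M *\<^sub>v y = 0\<^sub>v ?n"
  proof (rule eq_vecI)
    fix a assume "a < dim_vec (0\<^sub>v ?n :: 'a Matrix.vec)"
    then have "vec_index (M *\<^sub>v y) a = (\<Sum>b<?n. A $ (rs ! a) $ (cs ! b) * x $ (cs ! b))"
      by (simp add: M_def y_def scalar_prod_def atLeast0LessThan)
    also have "\<dots> = (A *v x) $ (rs ! a)"
      using sum.reindex_bij_betw[OF cs_bij, of "\<lambda>c. A $ (rs ! a) $ c * x $ c"]
      by (simp add: matrix_vector_mult_def)
    finally show "vec_index (M *\<^sub>v y) a = vec_index (0\<^sub>v ?n) a"
      using Ax \<open>a < _\<close> by simp
  qed (simp add: M_def)
  then have "det M \<cdot>\<^sub>v y = 0\<^sub>v ?n"
  proof -
    have "det M \<cdot>\<^sub>v y = (adj_mat M * M) *\<^sub>v y"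
      using adj_mat[OF M] M y by auto
    also have "\<dots> = adj_mat M *\<^sub>v (M *\<^sub>v y)"
      using adj_mat[OF M] M y by (metis assoc_mult_mat_vec)
    finally show ?thesis
      using \<open>M *\<^sub>v y = 0\<^sub>v ?n\<close> adj_mat[OF M] by auto
  qed
  moreover obtain b where "b < ?n" "cs ! b = c"
    using cs_bij by (metis UNIV_I bij_betw_iff_bijections lessThan_iff)
  ultimately have "det M * x $ c = 0"
    by (metis index_smult_vec(1) index_zero_vec(1) y_def index_vec dim_vec)
  then show ?thesis
    using rs by (simp add: minor_def M_def mult.commute)
qed

lemma kernel_vector_from_minor:
  fixes A :: "('a::comm_ring_1)^'n^'m"
  assumes rs: "distinct rs" and cs: "distinct cs" "length cs = length rs" and j: "j \<notin> set cs"
    and annihilates: "\<And>rs' cs'. distinct rs' \<Longrightarrow> distinct cs' \<Longrightarrow>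
      length rs' = Suc (length rs) \<Longrightarrow> length cs' = Suc (length rs) \<Longrightarrow> r * minor A rs' cs' = 0"
  shows "\<exists>x. x $ j = r * minor A rs cs \<and> A *v x = 0"
proof -
  let ?k = "length rs"
  \<comment> \<open>x carries the signed cofactors of the last row of the minor on rows rs @ [i] and
    columns cs @ [j]; these do not depend on i, and by Laplace expansion (A x)_i is r times that
    minor.\<close>
  define cs' where "cs' = cs @ [j]"
  define cof where "cof b = (-1) ^ (?k + b) * minor A rs (take b cs' @ drop (Suc b) cs')" for b
  define x where "x = (\<chi> c. r * (\<Sum>b<Suc ?k. if cs' ! b = c then cof b else 0))"
  have cs': "distinct cs'" "length cs' = Suc ?k"
    using cs j by (simp_all add: cs'_def)
  have "x $ (cs' ! b) = r * cof b" if "b < Suc ?k" for b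
  proof -
    have "(\<Sum>b'<Suc ?k. if cs' ! b' = cs' ! b then cof b' else 0) =
        (\<Sum>b'<Suc ?k. if b' = b then cof b' else 0)"
      using cs' that by (intro sum.cong) (auto simp: nth_eq_iff_index_eq)
    then show ?thesis
      using that by (simp add: x_def)
  qed
  from this[of ?k] have "x $ j = r * minor A rs cs"
    using cs by (simp add: cs'_def cof_def nth_append flip: mult_2)
  moreover have "(A *v x) $ i = 0" for i
  proof -
    have "(A *v x) $ i =
        (\<Sum>c\<in>UNIV. \<Sum>b<Suc ?k. if cs' ! b = c then r * (A $ i $ c * cof b) else 0)"
      by (simp add: x_def matrix_vector_mult_def sum_distrib_left mult_ac if_distrib
          del: sum.lessThan_Suc cong: if_cong)
    also have "\<dots> =
        (\<Sum>b<Suc ?k. \<Sum>c\<in>UNIV. if cs' ! b = c then r * (A $ i $ c * cof b) else 0)"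
      by (rule sum.swap)
    also have "\<dots> = r * (\<Sum>b<Suc ?k. A $ i $ (cs' ! b) * cof b)"
      by (simp add: sum.delta sum_distrib_left del: sum.lessThan_Suc)
    also have "\<dots> = r * minor A (rs @ [i]) cs'"
      using cs' by (simp add: minor_snoc_row_expansion cof_def mult.assoc)
    also have "\<dots> = 0"
    proof (cases "i \<in> set rs")
      case True
      then show ?thesis
        by (simp add: minor_repeated_row)
    next
      case False
      then show ?thesis
        using annihilates rs cs' by simp
    qed
    finally show ?thesis .
  qed
  ultimately show ?thesis
    by (auto simp: Finite_Cartesian_Product.vec_eq_iff)
qed

theorem annihilated_minors_imp_kernel_vector:
  fixes A :: "('a::comm_ring_1)^'n^'m"
  assumes "k \<le> CARD('n)" and "r \<noteq> 0"
    and "\<And>rs cs. distinct rs \<Longrightarrow> distinct cs \<Longrightarrow> length rs = k \<Longrightarrow> length cs = k \<Longrightarrow>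
      r * minor A rs cs = 0"
  shows "\<exists>x. x \<noteq> 0 \<and> A *v x = 0"
  using assms
proof (induction k)
  case 0
  then show ?case
    by (metis minor_Nil distinct.simps(1) list.size(3) mult_1_right)
next
  case (Suc k)
  show ?case
  proof (cases "\<forall>rs cs. distinct rs \<longrightarrow> distinct cs \<longrightarrow> length rs = k \<longrightarrow> length cs = k \<longrightarrow>
      r * minor A rs cs = 0")
    case True
    then show ?thesis
      using Suc by simp
  next
    case False
    then obtain rs cs where rs: "distinct rs" "length rs = k"
      and cs: "distinct cs" "length cs = k" and nonzero: "r * minor A rs cs \<noteq> 0"
      by blast
    have "set cs \<noteq> UNIV"
      using cs Suc.prems(1) distinct_card by fastforce
    then obtain j where "j \<notin> set cs"
      by blast
    then obtain x where "x $ j = r * minor A rs cs" "A *v x = 0"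
      using kernel_vector_from_minor[OF rs(1) cs(1), of j r A] rs cs Suc.prems(3) by auto
    then show ?thesis
      using nonzero by (metis zero_index)
  qed
qed

lemma kernel_imp_left_kernel:
  fixes A :: "('a::comm_ring_1)^'n^'n"
  assumes "A *v x = 0" and "x \<noteq> 0"
  shows "\<exists>y. y \<noteq> 0 \<and> y v* A = 0"
proof -
  obtain c where c: "x $ c \<noteq> 0"
    using assms(2) by (auto simp: Finite_Cartesian_Product.vec_eq_iff)
  have "x $ c * minor (Finite_Cartesian_Product.transpose A) rs cs = 0"
    if "distinct rs" "length rs = CARD('n)" "length cs = CARD('n)" for rs cs
    using kernel_vector_annihilates_maximal_minors[OF assms(1) that] that
    by (simp add: minor_transpose)
  then obtain y where "y \<noteq> 0" "Finite_Cartesian_Product.transpose A *v y = 0"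
    using annihilated_minors_imp_kernel_vector[OF order.refl c] by blast
  then show ?thesis
    by auto
qed

lemma kernel_iff_left_kernel:
  fixes A :: "('a::comm_ring_1)^'n^'n"
  shows "(\<exists>x. x \<noteq> 0 \<and> A *v x = 0) \<longleftrightarrow> (\<exists>y. y \<noteq> 0 \<and> y v* A = 0)"
proof
  show "\<exists>x. x \<noteq> 0 \<and> A *v x = 0 \<Longrightarrow> \<exists>y. y \<noteq> 0 \<and> y v* A = 0"
    using kernel_imp_left_kernel by blast
  assume "\<exists>y. y \<noteq> 0 \<and> y v* A = 0"
  then obtain y where "Finite_Cartesian_Product.transpose A *v y = 0" "y \<noteq> 0"
    by auto
  from kernel_imp_left_kernel[OF this] show "\<exists>x. x \<noteq> 0 \<and> A *v x = 0"
    by auto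
qed

lemma mat_left_zero_divisor_iff_kernel:
  fixes A :: "('a::comm_ring_1)^'n^'n"
  shows "mat_left_zero_divisor A \<longleftrightarrow> (\<exists>x. x \<noteq> 0 \<and> A *v x = 0)"
proof
  assume "mat_left_zero_divisor A"
  then obtain B :: "'a^'n^'n" where "B \<noteq> 0" "A ** B = 0"
    by (auto simp: mat_left_zero_divisor_def)
  from \<open>B \<noteq> 0\<close> obtain j where "column j B \<noteq> 0"
    by (auto simp: Finite_Cartesian_Product.vec_eq_iff column_def)
  moreover have "A *v column j B = 0"
    using \<open>A ** B = 0\<close>
    by (simp add: Finite_Cartesian_Product.vec_eq_iff matrix_matrix_mult_def
        matrix_vector_mult_def column_def)
  ultimately show "\<exists>x. x \<noteq> 0 \<and> A *v x = 0"
    by blast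
next
  assume "\<exists>x. x \<noteq> 0 \<and> A *v x = 0"
  then obtain x where "x \<noteq> 0" "A *v x = 0"
    by blast
  define B :: "'a^'n^'n" where "B = (\<chi> i j. x $ i)"
  have "B \<noteq> 0"
    using \<open>x \<noteq> 0\<close> by (simp add: B_def Finite_Cartesian_Product.vec_eq_iff)
  moreover have "A ** B = 0"
    using \<open>A *v x = 0\<close>
    by (simp add: B_def Finite_Cartesian_Product.vec_eq_iff matrix_matrix_mult_def
        matrix_vector_mult_def)
  ultimately show "mat_left_zero_divisor A"
    by (auto simp: mat_left_zero_divisor_def)
qed

lemma mat_right_zero_divisor_iff_left_kernel:
  fixes A :: "('a::comm_ring_1)^'n^'n"
  shows "mat_right_zero_divisor A \<longleftrightarrow> (\<exists>y. y \<noteq> 0 \<and> y v* A = 0)"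
proof
  assume "mat_right_zero_divisor A"
  then obtain B :: "'a^'n^'n" where "B \<noteq> 0" "B ** A = 0"
    by (auto simp: mat_right_zero_divisor_def)
  from \<open>B \<noteq> 0\<close> obtain i where "Finite_Cartesian_Product.row i B \<noteq> 0"
    by (auto simp: Finite_Cartesian_Product.vec_eq_iff Finite_Cartesian_Product.row_def)
  moreover have "Finite_Cartesian_Product.row i B v* A = 0"
    using \<open>B ** A = 0\<close>
    by (simp add: Finite_Cartesian_Product.vec_eq_iff matrix_matrix_mult_def
        vector_matrix_mult_def Finite_Cartesian_Product.row_def)
  ultimately show "\<exists>y. y \<noteq> 0 \<and> y v* A = 0"
    by blast
next
  assume "\<exists>y. y \<noteq> 0 \<and> y v* A = 0"
  then obtain y where "y \<noteq> 0" "y v* A = 0"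
    by blast
  define B :: "'a^'n^'n" where "B = (\<chi> i. y)"
  have "B \<noteq> 0"
    using \<open>y \<noteq> 0\<close> by (simp add: B_def Finite_Cartesian_Product.vec_eq_iff)
  moreover have "B ** A = 0"
    using \<open>y v* A = 0\<close>
    by (simp add: B_def Finite_Cartesian_Product.vec_eq_iff matrix_matrix_mult_def
        vector_matrix_mult_def)
  ultimately show "mat_right_zero_divisor A"
    by (auto simp: mat_right_zero_divisor_def)
qed

theorem corollary2:
  fixes A :: "('a::comm_ring_1)^'n^'n"
  assumes "CARD('n) > 1"
    and "mat_left_zero_divisor A \<or> mat_right_zero_divisor A"
  shows "mat_two_sided_zero_divisor A"
  using assms(2)
  by (simp add: mat_two_sided_zero_divisor_def mat_left_zero_divisor_iff_kernel
      mat_right_zero_divisor_iff_left_kernel kernel_iff_left_kernel)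

end
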